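(* There are infinitely many graphs $G$, each of which is a one-point union of regular graphs, such that $\chi_{la}(G)=2$.
   Context: A one-point union of graphs $H_1,\dots,H_r$ ($r\ge 2$) is the graph obtained from their disjoint union by choosing one vertex in each $H_i$ and identifying these $r$ vertices into a single vertex. For a connected graph $G=(V,E)$ with $q=|E|$, a local antimagic labeling is a bijection $f:E\to\{1,\dots,q\}$ such that adjacent vertices $x,y$ satisfy $f^+(x)\ne f^+(y)$, where $f^+(x)=\sum f(e)$ over edges $e$ incident to $x$; $\chi_{la}(G)$ is the minimum number of distinct values of $f^+$ over all local antimagic labelings of $G$. *)

theory Defs
  imports Main
begin

definition simple_graph :: "'a set \<Rightarrow> 'a set set \<Rightarrow> bool" where
  "simple_graph V E \<longleftrightarrow> finite V \<and> (\<forall>e\<in>E. \<exists>x y. x \<noteq> y \<and> x \<in> V \<and> y \<in> V \<and> e = {x, y})"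

definition connected_graph :: "'a set \<Rightarrow> 'a set set \<Rightarrow> bool" where
  "connected_graph V E \<longleftrightarrow> V \<noteq> {} \<and>
     (\<forall>x\<in>V. \<forall>y\<in>V. (\<lambda>a b. {a, b} \<in> E)\<^sup>*\<^sup>* x y)"

definition degree :: "'a set set \<Rightarrow> 'a \<Rightarrow> nat" where
  "degree E x = card {e \<in> E. x \<in> e}"

definition regular_graph :: "'a set \<Rightarrow> 'a set set \<Rightarrow> bool" where
  "regular_graph V E \<longleftrightarrow> simple_graph V E \<and> (\<exists>k. \<forall>x\<in>V. degree E x = k)"

text \<open>This is exactly (up to renaming of vertices) the graph obtained from the disjoint union by
  identifying one chosen vertex of each H_i.\<close>
definition one_point_union_of_regular :: "'a set \<Rightarrow> 'a set set \<Rightarrow> bool" where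
  "one_point_union_of_regular V E \<longleftrightarrow>
     (\<exists>r::nat. \<exists>HV :: nat \<Rightarrow> 'a set. \<exists>HE :: nat \<Rightarrow> 'a set set. \<exists>v.
        r \<ge> 2 \<and>
        (\<forall>i<r. regular_graph (HV i) (HE i) \<and> HE i \<noteq> {} \<and> v \<in> HV i) \<and>
        (\<forall>i<r. \<forall>j<r. i \<noteq> j \<longrightarrow> HV i \<inter> HV j = {v}) \<and>
        V = (\<Union>i<r. HV i) \<and> E = (\<Union>i<r. HE i))"

definition vsum :: "('a set \<Rightarrow> nat) \<Rightarrow> 'a set set \<Rightarrow> 'a \<Rightarrow> nat" where
  "vsum f E x = (\<Sum>e\<in>{e \<in> E. x \<in> e}. f e)"

definition local_antimagic_labeling :: "'a set \<Rightarrow> 'a set set \<Rightarrow> ('a set \<Rightarrow> nat) \<Rightarrow> bool" where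
  "local_antimagic_labeling V E f \<longleftrightarrow>
     bij_betw f E {1..card E} \<and>
     (\<forall>x\<in>V. \<forall>y\<in>V. {x, y} \<in> E \<longrightarrow> vsum f E x \<noteq> vsum f E y)"

definition chi_la :: "'a set \<Rightarrow> 'a set set \<Rightarrow> nat" where
  "chi_la V E = Inf {card (vsum f E ` V) | f. local_antimagic_labeling V E f}"

end

(*
  Take n \<ge> 2 and let G be the one-point union of n cycles of length 4n + 2 and one cycle
  of length 2n, which has q = (2n + 1)^2 - 1 edges.  Any local antimagic
  labeling has at least two vertex sums because G has an edge.  Conversely, with m = 2n + 1,
  walk around each cycle from the common vertex and require the sums at consecutive vertices
  to alternate between m^2 and m^2 + m: then the even-numbered edges carry an arithmetic
  progression with difference m, and each odd-numbered edge carries the complement to m^2 of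
  its predecessor.  Starting the progressions at 1, ..., n on the long cycles and at m on the
  short one makes the labels run exactly through 1, ..., q, and the 2n + 2 edges at the
  common vertex add up to m^2 + m, so only the two sums m^2 and m^2 + m occur.
*)

theory Submission
  imports Defs "HOL-Library.Nat_Bijection"
begin

lemma simple_graph_UN:
  assumes "finite I" "\<And>i. i \<in> I \<Longrightarrow> simple_graph (V i) (E i)"
  shows "simple_graph (\<Union>i\<in>I. V i) (\<Union>i\<in>I. E i)"
  using assms unfolding simple_graph_def by (simp add: Ball_def) (meson UN_I)

lemma connected_graphI:
  assumes "v \<in> V" "\<And>x. x \<in> V \<Longrightarrow> (\<lambda>a b. {a, b} \<in> E)\<^sup>*\<^sup>* v x"
  shows "connected_graph V E"
  unfolding connected_graph_def
proof (intro conjI ballI)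
  show "V \<noteq> {}" using assms(1) by blast
  have "symp (\<lambda>a b. {a, b} \<in> E)"
    by (rule sympI) (simp add: insert_commute)
  then have sym: "symp (\<lambda>a b. {a, b} \<in> E)\<^sup>*\<^sup>*" by (rule symp_rtranclp)
  fix x y assume "x \<in> V" "y \<in> V"
  then show "(\<lambda>a b. {a, b} \<in> E)\<^sup>*\<^sup>* x y"
    using assms(2) sympD[OF sym] by (meson rtranclp_trans)
qed

lemma connected_graph_UN:
  assumes "I \<noteq> {}" "\<And>i. i \<in> I \<Longrightarrow> connected_graph (V i) (E i)" "\<And>i. i \<in> I \<Longrightarrow> v \<in> V i"
  shows "connected_graph (\<Union>i\<in>I. V i) (\<Union>i\<in>I. E i)"
proof (rule connected_graphI)
  show "v \<in> (\<Union>i\<in>I. V i)" using assms(1,3) by blast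
  fix x assume "x \<in> (\<Union>i\<in>I. V i)"
  then obtain i where "i \<in> I" "x \<in> V i" by blast
  then have "(\<lambda>a b. {a, b} \<in> E i)\<^sup>*\<^sup>* v x"
    using assms(2,3) unfolding connected_graph_def by blast
  then show "(\<lambda>a b. {a, b} \<in> (\<Union>i\<in>I. E i))\<^sup>*\<^sup>* v x"
    by (rule rtranclp_mono[THEN predicate2D, rotated]) (use \<open>i \<in> I\<close> in blast)
qed

lemma chi_la_eq_2:
  assumes "finite V" "x \<in> V" "y \<in> V" "{x, y} \<in> E"
    and "local_antimagic_labeling V E f" "card (vsum f E ` V) \<le> 2"
  shows "chi_la V E = 2"
proof -
  have two: "2 \<le> card (vsum g E ` V)" if "local_antimagic_labeling V E g" for g
  proof -
    have "vsum g E x \<noteq> vsum g E y"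
      using that assms(2-4) unfolding local_antimagic_labeling_def by blast
    then have "2 = card {vsum g E x, vsum g E y}" by simp
    also have "\<dots> \<le> card (vsum g E ` V)"
      by (rule card_mono) (use assms(1-3) in auto)
    finally show ?thesis .
  qed
  show ?thesis
    unfolding chi_la_def
  proof (rule cInf_eq_minimum)
    show "2 \<in> {card (vsum g E ` V) |g. local_antimagic_labeling V E g}"
      using two[OF assms(5)] assms(5,6) by (intro CollectI exI[of _ f]) simp
  next
    fix c assume "c \<in> {card (vsum g E ` V) |g. local_antimagic_labeling V E g}"
    then show "2 \<le> c" using two by auto
  qed
qed

text \<open>Both \<open>j = 0\<close> and \<open>j = L i\<close> denote the common vertex \<open>0\<close>, so that
  \<open>bouquet_edge L i (L i - 1)\<close> closes the \<open>i\<close>-th cycle.\<close>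

definition bouquet_vertex :: "(nat \<Rightarrow> nat) \<Rightarrow> nat \<Rightarrow> nat \<Rightarrow> nat" where
  "bouquet_vertex L i j = (if j = 0 \<or> L i \<le> j then 0 else Suc (prod_encode (i, j)))"

definition bouquet_edge :: "(nat \<Rightarrow> nat) \<Rightarrow> nat \<Rightarrow> nat \<Rightarrow> nat set" where
  "bouquet_edge L i j = {bouquet_vertex L i j, bouquet_vertex L i (Suc j)}"

definition cycle_vertices :: "(nat \<Rightarrow> nat) \<Rightarrow> nat \<Rightarrow> nat set" where
  "cycle_vertices L i = bouquet_vertex L i ` {..<L i}"

definition cycle_edges :: "(nat \<Rightarrow> nat) \<Rightarrow> nat \<Rightarrow> nat set set" where
  "cycle_edges L i = bouquet_edge L i ` {..<L i}"

definition bouquet_vertices :: "nat \<Rightarrow> (nat \<Rightarrow> nat) \<Rightarrow> nat set" where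
  "bouquet_vertices r L = (\<Union>i<r. cycle_vertices L i)"

definition bouquet_edges :: "nat \<Rightarrow> (nat \<Rightarrow> nat) \<Rightarrow> nat set set" where
  "bouquet_edges r L = (\<Union>i<r. cycle_edges L i)"

lemma bouquet_vertex_eq_0_iff [simp]: "bouquet_vertex L i j = 0 \<longleftrightarrow> j = 0 \<or> L i \<le> j"
  by (simp add: bouquet_vertex_def)

lemma bouquet_vertex_0 [simp]: "bouquet_vertex L i 0 = 0"
  by (simp add: bouquet_vertex_def)

lemma bouquet_vertex_eq_iff:
  "bouquet_vertex L i j = bouquet_vertex L i' j' \<longleftrightarrow>
     (j = 0 \<or> L i \<le> j) \<and> (j' = 0 \<or> L i' \<le> j') \<or> i = i' \<and> j = j' \<and> 0 < j \<and> j < L i"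
  by (auto simp: bouquet_vertex_def)

lemma inner_vertex_mem_bouquet_edge:
  assumes "0 < j" "j < L i" "j' < L i'"
  shows "bouquet_vertex L i j \<in> bouquet_edge L i' j' \<longleftrightarrow> i' = i \<and> (Suc j' = j \<or> j' = j)"
  using assms by (auto simp: bouquet_edge_def bouquet_vertex_eq_iff)

lemma hub_mem_bouquet_edge:
  assumes "j' < L i'"
  shows "0 \<in> bouquet_edge L i' j' \<longleftrightarrow> j' = 0 \<or> Suc j' = L i'"
  using assms by (auto simp: bouquet_edge_def)

lemma bouquet_edge_inj:
  assumes "3 \<le> L i" "3 \<le> L i'" "j < L i" "j' < L i'"
    and "bouquet_edge L i j = bouquet_edge L i' j'"
  shows "i = i' \<and> j = j'"
  using assms unfolding bouquet_edge_def doubleton_eq_iff bouquet_vertex_eq_iff by auto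

lemma hub_mem_cycle_vertices: "0 < L i \<Longrightarrow> 0 \<in> cycle_vertices L i"
  unfolding cycle_vertices_def by (auto intro!: image_eqI[of _ _ 0])

lemma bouquet_vertex_Suc_mem_cycle_vertices:
  assumes "j < L i"
  shows "bouquet_vertex L i (Suc j) \<in> cycle_vertices L i"
proof (cases "Suc j < L i")
  case True
  then show ?thesis by (simp add: cycle_vertices_def)
next
  case False
  then show ?thesis using assms hub_mem_cycle_vertices[of L i] by (simp add: bouquet_vertex_def)
qed

lemma card_cycle_vertices: "card (cycle_vertices L i) = L i"
proof -
  have "inj_on (bouquet_vertex L i) {..<L i}"
    by (auto simp: inj_on_def bouquet_vertex_eq_iff)
  then show ?thesis unfolding cycle_vertices_def by (simp add: card_image)
qed

lemma cycle_vertices_Int: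
  assumes "i \<noteq> i'" "0 < L i" "0 < L i'"
  shows "cycle_vertices L i \<inter> cycle_vertices L i' = {0}"
  using assms hub_mem_cycle_vertices[of L]
  by (auto simp: cycle_vertices_def bouquet_vertex_eq_iff)

lemma cycle_regular:
  assumes "3 \<le> L i"
  shows "regular_graph (cycle_vertices L i) (cycle_edges L i)"
  unfolding regular_graph_def
proof
  show "simple_graph (cycle_vertices L i) (cycle_edges L i)"
    unfolding simple_graph_def
  proof (intro conjI ballI)
    fix e assume "e \<in> cycle_edges L i"
    then obtain j where "j < L i" "e = bouquet_edge L i j" by (auto simp: cycle_edges_def)
    moreover have "bouquet_vertex L i j \<noteq> bouquet_vertex L i (Suc j)"
      using assms \<open>j < L i\<close> by (auto simp: bouquet_vertex_eq_iff)
    moreover have "bouquet_vertex L i j \<in> cycle_vertices L i"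
      using \<open>j < L i\<close> by (simp add: cycle_vertices_def)
    ultimately show "\<exists>x y. x \<noteq> y \<and> x \<in> cycle_vertices L i \<and> y \<in> cycle_vertices L i \<and> e = {x, y}"
      using bouquet_vertex_Suc_mem_cycle_vertices[of j L i] by (auto simp: bouquet_edge_def)
  qed (simp add: cycle_vertices_def)
  have inj: "inj_on (bouquet_edge L i) {..<L i}"
    using bouquet_edge_inj[of L i i] assms by (auto simp: inj_on_def)
  have "degree (cycle_edges L i) x = 2" if x: "x \<in> cycle_vertices L i" for x
  proof -
    obtain j where j: "j < L i" "x = bouquet_vertex L i j"
      using x unfolding cycle_vertices_def by blast
    have incident: "{j' \<in> {..<L i}. x \<in> bouquet_edge L i j'} = (if j = 0 then {0, L i - 1} else {j - 1, j})"
      using j assms by (auto simp: inner_vertex_mem_bouquet_edge hub_mem_bouquet_edge)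
    have "{e \<in> cycle_edges L i. x \<in> e} = bouquet_edge L i ` {j' \<in> {..<L i}. x \<in> bouquet_edge L i j'}"
      by (auto simp: cycle_edges_def)
    then have "degree (cycle_edges L i) x = card {j' \<in> {..<L i}. x \<in> bouquet_edge L i j'}"
      unfolding degree_def by (metis (no_types, lifting) card_image inj_on_subset[OF inj] mem_Collect_eq subsetI)
    then show ?thesis using assms unfolding incident by auto
  qed
  then show "\<exists>k. \<forall>x\<in>cycle_vertices L i. degree (cycle_edges L i) x = k" by blast
qed

lemma cycle_connected:
  assumes "0 < L i"
  shows "connected_graph (cycle_vertices L i) (cycle_edges L i)"
proof (rule connected_graphI)
  show "0 \<in> cycle_vertices L i" using assms by (rule hub_mem_cycle_vertices)
  have "(\<lambda>a b. {a, b} \<in> cycle_edges L i)\<^sup>*\<^sup>* 0 (bouquet_vertex L i j)" if "j \<le> L i" for j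
    using that
  proof (induction j)
    case (Suc j)
    then have "bouquet_edge L i j \<in> cycle_edges L i" by (simp add: cycle_edges_def)
    with Suc show ?case by (auto simp: bouquet_edge_def intro: rtranclp.rtrancl_into_rtrancl)
  qed simp
  then show "(\<lambda>a b. {a, b} \<in> cycle_edges L i)\<^sup>*\<^sup>* 0 x" if "x \<in> cycle_vertices L i" for x
    using that by (auto simp: cycle_vertices_def)
qed

lemma bouquet_one_point_union:
  assumes "2 \<le> r" "\<And>i. i < r \<Longrightarrow> 3 \<le> L i"
  shows "one_point_union_of_regular (bouquet_vertices r L) (bouquet_edges r L)"
  unfolding one_point_union_of_regular_def
proof (intro exI conjI allI impI)
  fix i assume "i < r"
  then have "3 \<le> L i" by (rule assms(2))
  then show "regular_graph (cycle_vertices L i) (cycle_edges L i)" "cycle_edges L i \<noteq> {}"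
      "0 \<in> cycle_vertices L i"
    by (simp_all add: cycle_regular hub_mem_cycle_vertices)
      (simp add: cycle_edges_def lessThan_empty_iff)
  fix i' assume "i' < r" "i \<noteq> i'"
  with \<open>3 \<le> L i\<close> show "cycle_vertices L i \<inter> cycle_vertices L i' = {0}"
    using assms(2)[of i'] by (intro cycle_vertices_Int) simp_all
qed (use assms(1) in \<open>simp_all add: bouquet_vertices_def bouquet_edges_def\<close>)

lemma bouquet_simple_graph:
  assumes "\<And>i. i < r \<Longrightarrow> 3 \<le> L i"
  shows "simple_graph (bouquet_vertices r L) (bouquet_edges r L)"
  unfolding bouquet_vertices_def bouquet_edges_def
  using assms cycle_regular by (intro simple_graph_UN) (simp_all add: regular_graph_def)

lemma bouquet_connected:
  assumes "0 < r" "\<And>i. i < r \<Longrightarrow> 0 < L i"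
  shows "connected_graph (bouquet_vertices r L) (bouquet_edges r L)"
  unfolding bouquet_vertices_def bouquet_edges_def
  using assms by (intro connected_graph_UN[where v = 0]) (auto simp: cycle_connected hub_mem_cycle_vertices)

lemma card_bouquet_vertices_ge:
  assumes "i < r"
  shows "L i \<le> card (bouquet_vertices r L)"
proof -
  have "finite (bouquet_vertices r L)" by (simp add: bouquet_vertices_def cycle_vertices_def)
  moreover have "cycle_vertices L i \<subseteq> bouquet_vertices r L"
    using assms by (auto simp: bouquet_vertices_def)
  ultimately show ?thesis using card_mono card_cycle_vertices by metis
qed

lemma bij_betw_if_inj_on_card_eq:
  assumes "inj_on f A" "f ` A \<subseteq> B" "card A = card B" "finite B"
  shows "bij_betw f A B"
  using assms card_subset_eq[of B "f ` A"] by (simp add: bij_betw_def card_image)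

lemma vsum_image_inv_into:
  assumes "inj_on ed I"
  shows "vsum (lab \<circ> inv_into I ed) (ed ` I) x = (\<Sum>p\<in>{p \<in> I. x \<in> ed p}. lab p)"
proof -
  have "{e \<in> ed ` I. x \<in> e} = ed ` {p \<in> I. x \<in> ed p}" by blast
  moreover have "inj_on ed {p \<in> I. x \<in> ed p}" using assms by (rule inj_on_subset) blast
  ultimately show ?thesis
    unfolding vsum_def by (simp add: sum.reindex inv_into_f_f[OF assms])
qed

lemma bij_betw_image_inv_into:
  assumes "inj_on ed I" "bij_betw lab I {1..card I}"
  shows "bij_betw (lab \<circ> inv_into I ed) (ed ` I) {1..card (ed ` I)}"
proof -
  have "bij_betw (inv_into I ed) (ed ` I) I"
    using assms(1) by (simp add: bij_betw_inv_into inj_on_imp_bij_betw)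
  then show ?thesis
    using bij_betw_trans assms by (simp add: card_image)
qed

definition edge_index :: "nat \<Rightarrow> (nat \<Rightarrow> nat) \<Rightarrow> (nat \<times> nat) set" where
  "edge_index r L = (SIGMA i:{..<r}. {..<L i})"

definition bouquet_labeling ::
    "nat \<Rightarrow> (nat \<Rightarrow> nat) \<Rightarrow> (nat \<Rightarrow> nat \<Rightarrow> nat) \<Rightarrow> nat set \<Rightarrow> nat" where
  "bouquet_labeling r L lab = case_prod lab \<circ> inv_into (edge_index r L) (case_prod (bouquet_edge L))"

lemma bouquet_edges_eq_image: "bouquet_edges r L = case_prod (bouquet_edge L) ` edge_index r L"
  by (auto simp: bouquet_edges_def cycle_edges_def edge_index_def)

lemma inj_on_bouquet_edge:
  assumes "\<And>i. i < r \<Longrightarrow> 3 \<le> L i"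
  shows "inj_on (case_prod (bouquet_edge L)) (edge_index r L)"
proof (rule inj_onI, clarify)
  fix i j i' j'
  assume "(i, j) \<in> edge_index r L" "(i', j') \<in> edge_index r L"
    and "bouquet_edge L i j = bouquet_edge L i' j'"
  then show "i = i' \<and> j = j'"
    using assms by (intro bouquet_edge_inj) (auto simp: edge_index_def)
qed

lemma bouquet_labeling_bij:
  assumes "\<And>i. i < r \<Longrightarrow> 3 \<le> L i" "bij_betw (case_prod lab) (edge_index r L) {1..card (edge_index r L)}"
  shows "bij_betw (bouquet_labeling r L lab) (bouquet_edges r L) {1..card (bouquet_edges r L)}"
  unfolding bouquet_labeling_def bouquet_edges_eq_image
  using inj_on_bouquet_edge[OF assms(1)] assms(2) by (rule bij_betw_image_inv_into)

lemma vsum_bouquet_labeling: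
  assumes "\<And>i. i < r \<Longrightarrow> 3 \<le> L i"
  shows "vsum (bouquet_labeling r L lab) (bouquet_edges r L) x
           = (\<Sum>p\<in>{p \<in> edge_index r L. x \<in> case_prod (bouquet_edge L) p}. case_prod lab p)"
  unfolding bouquet_labeling_def bouquet_edges_eq_image
  by (rule vsum_image_inv_into[OF inj_on_bouquet_edge[OF assms]])

lemma vsum_bouquet_labeling_inner:
  assumes "\<And>i. i < r \<Longrightarrow> 3 \<le> L i" "i < r" "0 < j" "j < L i"
  shows "vsum (bouquet_labeling r L lab) (bouquet_edges r L) (bouquet_vertex L i j)
           = lab i (j - 1) + lab i j"
proof -
  have "{p \<in> edge_index r L. bouquet_vertex L i j \<in> case_prod (bouquet_edge L) p} = {(i, j - 1), (i, j)}"
    using assms(2-4) by (auto simp: edge_index_def inner_vertex_mem_bouquet_edge)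
  then show ?thesis
    using assms(3) by (simp add: vsum_bouquet_labeling[OF assms(1)])
qed

lemma vsum_bouquet_labeling_hub:
  assumes "\<And>i. i < r \<Longrightarrow> 3 \<le> L i"
  shows "vsum (bouquet_labeling r L lab) (bouquet_edges r L) 0
           = (\<Sum>i<r. lab i 0 + lab i (L i - 1))"
proof -
  let ?first = "(\<lambda>i. (i, 0)) ` {..<r}" and ?last = "(\<lambda>i. (i, L i - 1)) ` {..<r}"
  have "{p \<in> edge_index r L. 0 \<in> case_prod (bouquet_edge L) p} = ?first \<union> ?last"
    using assms by (force simp: edge_index_def hub_mem_bouquet_edge)
  moreover have "?first \<inter> ?last = {}"
    using assms by force
  ultimately have "vsum (bouquet_labeling r L lab) (bouquet_edges r L) 0
      = (\<Sum>p\<in>?first. case_prod lab p) + (\<Sum>p\<in>?last. case_prod lab p)"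
    by (simp add: vsum_bouquet_labeling[OF assms] sum.union_disjoint)
  also have "\<dots> = (\<Sum>i<r. lab i 0 + lab i (L i - 1))"
    by (simp add: sum.reindex inj_on_def sum.distrib)
  finally show ?thesis .
qed

definition cycle_lengths :: "nat \<Rightarrow> nat \<Rightarrow> nat" where
  "cycle_lengths n i = (if i < n then 4*n + 2 else 2*n)"

definition first_label :: "nat \<Rightarrow> nat \<Rightarrow> nat" where
  "first_label n i = (if i < n then i + 1 else 2*n + 1)"

definition even_label :: "nat \<Rightarrow> nat \<Rightarrow> nat \<Rightarrow> nat" where
  "even_label n i t = first_label n i + t * (2*n + 1)"

definition label :: "nat \<Rightarrow> nat \<Rightarrow> nat \<Rightarrow> nat" where
  "label n i j =
     (if even j then even_label n i (j div 2) else (2*n + 1)^2 - even_label n i (j div 2))"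

lemma even_label_bounds:
  assumes "i \<le> n" "2 * t < cycle_lengths n i"
  shows "0 < even_label n i t" "even_label n i t < (2*n + 1)^2"
proof -
  show "0 < even_label n i t" by (simp add: even_label_def first_label_def)
  have "even_label n i t \<le> n + 2*n * (2*n + 1)"
  proof (cases "i < n")
    case True
    then have "t * (2*n + 1) \<le> 2*n * (2*n + 1)"
      using assms(2) by (intro mult_le_mono1) (simp add: cycle_lengths_def)
    then show ?thesis using True by (simp add: even_label_def first_label_def)
  next
    case False
    then have "i = n" "t + 1 \<le> n" using assms by (simp_all add: cycle_lengths_def)
    then have "even_label n i t = (t + 1) * (2*n + 1)" by (simp add: even_label_def first_label_def)
    also have "\<dots> \<le> n * (2*n + 1)" using \<open>t + 1 \<le> n\<close> by (rule mult_le_mono1)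
    finally show ?thesis by simp
  qed
  then show "even_label n i t < (2*n + 1)^2" by (simp add: power2_eq_square algebra_simps)
qed

lemma label_bounds:
  assumes "i \<le> n" "j < cycle_lengths n i"
  shows "1 \<le> label n i j \<and> label n i j < (2*n + 1)^2"
proof -
  have "2 * (j div 2) < cycle_lengths n i" using assms(2) by linarith
  from even_label_bounds[OF assms(1) this] show ?thesis by (auto simp: label_def)
qed

lemma label_pair_sum:
  assumes "i \<le> n" "0 < j" "j < cycle_lengths n i"
  shows "label n i (j - 1) + label n i j = (if odd j then (2*n + 1)^2 else (2*n + 1)^2 + (2*n + 1))"
proof (cases "odd j")
  case True
  define t where "t = j div 2"
  have j: "j = 2*t + 1" using True unfolding t_def by presburger
  then have "even_label n i t < (2*n + 1)^2"
    using assms(3) by (intro even_label_bounds[OF assms(1)]) simp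
  then show ?thesis using j by (simp add: label_def)
next
  case False
  define t where "t = j div 2 - 1"
  have j: "j = 2*t + 2" using False assms(2) unfolding t_def by presburger
  then have "even_label n i t < (2*n + 1)^2"
    using assms(3) by (intro even_label_bounds[OF assms(1)]) simp
  moreover have "even_label n i (t + 1) = even_label n i t + (2*n + 1)"
    by (simp add: even_label_def)
  moreover have "(2*t + 1) div 2 = t" "(2*t + 2) div 2 = t + 1" by simp_all
  ultimately show ?thesis using j by (simp add: label_def)
qed

lemma label_hub_sum:
  assumes "0 < n"
  shows "(\<Sum>i<Suc n. label n i 0 + label n i (cycle_lengths n i - 1)) = (2*n + 1)^2 + (2*n + 1)"
proof -
  have "label n i 0 + label n i (cycle_lengths n i - 1) = 2*n + 1" if "i < n" for i
  proof -
    have "cycle_lengths n i - 1 = 2*(2*n) + 1" using that by (simp add: cycle_lengths_def)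
    then show ?thesis
      using that by (simp add: label_def even_label_def first_label_def power2_eq_square algebra_simps)
  qed
  moreover have "label n n 0 + label n n (cycle_lengths n n - 1) = (n + 2) * (2*n + 1)"
  proof -
    have "cycle_lengths n n - 1 = 2*(n - 1) + 1" using assms by (simp add: cycle_lengths_def)
    moreover have "even_label n n (n - 1) = n * (2*n + 1)"
      using assms by (cases n) (simp_all add: even_label_def first_label_def)
    moreover have "(2*n + 1)^2 = n * (2*n + 1) + (n + 1) * (2*n + 1)"
      by (simp add: power2_eq_square algebra_simps)
    ultimately show ?thesis
      by (simp add: label_def even_label_def first_label_def algebra_simps)
  qed
  ultimately show ?thesis by (simp add: power2_eq_square algebra_simps)
qed

text \<open>The inverse of \<^const>\<open>label\<close>, read off from quotient and remainder modulo \<open>2n + 1\<close>.\<close>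

definition label_index :: "nat \<Rightarrow> nat \<Rightarrow> nat \<times> nat" where
  "label_index n v =
     (let q = v div (2*n + 1); r = v mod (2*n + 1) in
      if r = 0 then (if q \<le> n then (n, 2 * (q - 1)) else (n, 2 * (2*n - q) + 1))
      else if r \<le> n then (r - 1, 2 * q) else (2*n - r, 2 * (2*n - q) + 1))"

lemma label_index_div_mod:
  assumes "r < 2*n + 1"
  shows "label_index n (q * (2*n + 1) + r) =
    (if r = 0 then (if q \<le> n then (n, 2 * (q - 1)) else (n, 2 * (2*n - q) + 1))
     else if r \<le> n then (r - 1, 2 * q) else (2*n - r, 2 * (2*n - q) + 1))"
proof -
  define m where "m = 2*n + 1"
  have m: "m \<noteq> 0" "r < m" using assms by (simp_all add: m_def)
  then have "(q * m + r) div m = q" "(q * m + r) mod m = r" by simp_all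
  with m show ?thesis unfolding label_index_def Let_def m_def[symmetric] by simp
qed

lemma square_minus_multiple:
  fixes a n t :: nat
  assumes "a \<le> 2*n + 1" "t \<le> 2*n"
  shows "(2*n + 1)^2 - (a + t * (2*n + 1)) = (2*n - t) * (2*n + 1) + (2*n + 1 - a)"
proof -
  have "(2*n + 1)^2 = ((2*n - t) + t + 1) * (2*n + 1)"
    using assms(2) by (simp add: power2_eq_square)
  also have "\<dots> = (2*n - t) * (2*n + 1) + t * (2*n + 1) + (2*n + 1)"
    by (simp only: add_mult_distrib mult_1)
  finally show ?thesis using assms(1) by simp
qed

lemma label_index_label:
  assumes "i \<le> n" "j < cycle_lengths n i"
  shows "label_index n (label n i j) = (i, j)"
proof -
  obtain t where j: "j = 2*t \<or> j = 2*t + 1" by (metis evenE oddE)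
  show ?thesis
  proof (cases "i < n")
    case True
    then have "t \<le> 2*n" using assms(2) j by (auto simp: cycle_lengths_def)
    have "label n i (2*t) = t * (2*n + 1) + (i + 1)"
      using True by (simp add: label_def even_label_def first_label_def)
    moreover have "label n i (2*t + 1) = (2*n - t) * (2*n + 1) + (2*n - i)"
      using True \<open>t \<le> 2*n\<close> square_minus_multiple[of "i + 1" n t]
      by (simp add: label_def even_label_def first_label_def)
    moreover have "label_index n (t * (2*n + 1) + (i + 1)) = (i, 2*t)"
      using True label_index_div_mod[of "i + 1" n t] by simp
    moreover have "label_index n ((2*n - t) * (2*n + 1) + (2*n - i)) = (i, 2*t + 1)"
      using True \<open>t \<le> 2*n\<close> label_index_div_mod[of "2*n - i" n "2*n - t"] by simp
    ultimately show ?thesis using j by auto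
  next
    case False
    then have "i = n" "t < n" using assms j by (auto simp: cycle_lengths_def)
    have "label n n (2*t) = (t + 1) * (2*n + 1) + 0"
      by (simp add: label_def even_label_def first_label_def)
    moreover have "label n n (2*t + 1) = (2*n - t) * (2*n + 1) + 0"
      using \<open>t < n\<close> square_minus_multiple[of "2*n + 1" n t]
      by (simp add: label_def even_label_def first_label_def)
    moreover have "label_index n ((t + 1) * (2*n + 1) + 0) = (n, 2*t)"
      using \<open>t < n\<close> label_index_div_mod[of 0 n "t + 1"] by simp
    moreover have "label_index n ((2*n - t) * (2*n + 1) + 0) = (n, 2*t + 1)"
      using \<open>t < n\<close> label_index_div_mod[of 0 n "2*n - t"] by simp
    ultimately show ?thesis using j \<open>i = n\<close> by auto
  qed
qed

lemma card_edge_index: "card (edge_index (Suc n) (cycle_lengths n)) = (2*n + 1)^2 - 1"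
proof -
  have "card (edge_index (Suc n) (cycle_lengths n)) = (\<Sum>i<Suc n. cycle_lengths n i)"
    by (simp add: edge_index_def)
  also have "\<dots> = n * (4*n + 2) + 2*n" by (simp add: cycle_lengths_def)
  finally show ?thesis by (simp add: power2_eq_square algebra_simps)
qed

lemma label_bij:
  "bij_betw (case_prod (label n)) (edge_index (Suc n) (cycle_lengths n))
     {1..card (edge_index (Suc n) (cycle_lengths n))}"
proof (rule bij_betw_if_inj_on_card_eq)
  show "inj_on (case_prod (label n)) (edge_index (Suc n) (cycle_lengths n))"
    by (rule inj_on_inverseI[where g = "label_index n"])
      (auto simp: edge_index_def label_index_label)
  show "case_prod (label n) ` edge_index (Suc n) (cycle_lengths n)
          \<subseteq> {1..card (edge_index (Suc n) (cycle_lengths n))}"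
  proof
    fix v assume "v \<in> case_prod (label n) ` edge_index (Suc n) (cycle_lengths n)"
    then obtain i j where ij: "(i, j) \<in> edge_index (Suc n) (cycle_lengths n)" "v = label n i j"
      by auto
    then have "i \<le> n" "j < cycle_lengths n i" by (auto simp: edge_index_def)
    then show "v \<in> {1..card (edge_index (Suc n) (cycle_lengths n))}"
      using label_bounds[of i n j] ij(2) unfolding card_edge_index atLeastAtMost_iff by linarith
  qed
qed simp_all

lemma vsum_label_bouquet:
  assumes "2 \<le> n" "i \<le> n" "j \<le> cycle_lengths n i"
  shows "vsum (bouquet_labeling (Suc n) (cycle_lengths n) (label n))
             (bouquet_edges (Suc n) (cycle_lengths n)) (bouquet_vertex (cycle_lengths n) i j)
           = (if odd j then (2*n + 1)^2 else (2*n + 1)^2 + (2*n + 1))"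
proof -
  have L: "\<And>i. i < Suc n \<Longrightarrow> 3 \<le> cycle_lengths n i"
    using assms(1) by (simp add: cycle_lengths_def)
  show ?thesis
  proof (cases "0 < j \<and> j < cycle_lengths n i")
    case True
    then show ?thesis
      using assms(2) label_pair_sum[of i n j] by (simp add: vsum_bouquet_labeling_inner[OF L])
  next
    case False
    then have "j = 0 \<or> j = cycle_lengths n i" using assms(3) by auto
    then have hub: "bouquet_vertex (cycle_lengths n) i j = 0" and "even j"
      by (auto simp: cycle_lengths_def)
    moreover have "vsum (bouquet_labeling (Suc n) (cycle_lengths n) (label n))
        (bouquet_edges (Suc n) (cycle_lengths n)) 0 = (2*n + 1)^2 + (2*n + 1)"
      using assms(1) by (simp only: vsum_bouquet_labeling_hub[OF L] label_hub_sum)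
    ultimately show ?thesis unfolding hub by simp
  qed
qed

lemma label_local_antimagic:
  assumes "2 \<le> n"
  defines "V \<equiv> bouquet_vertices (Suc n) (cycle_lengths n)"
    and "E \<equiv> bouquet_edges (Suc n) (cycle_lengths n)"
    and "f \<equiv> bouquet_labeling (Suc n) (cycle_lengths n) (label n)"
  shows "local_antimagic_labeling V E f"
    and "vsum f E ` V \<subseteq> {(2*n + 1)^2, (2*n + 1)^2 + (2*n + 1)}"
proof -
  have L: "\<And>i. i < Suc n \<Longrightarrow> 3 \<le> cycle_lengths n i"
    using assms(1) by (simp add: cycle_lengths_def)
  have "vsum f E x \<noteq> vsum f E y" if xy: "{x, y} \<in> E" for x y
  proof -
    obtain i j where "i < Suc n" "j < cycle_lengths n i" "{x, y} = bouquet_edge (cycle_lengths n) i j"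
      using xy unfolding E_def bouquet_edges_def cycle_edges_def by blast
    then show ?thesis
      using vsum_label_bouquet[OF assms(1), of i j] vsum_label_bouquet[OF assms(1), of i "Suc j"]
      unfolding less_Suc_eq_le
      by (auto simp: f_def E_def bouquet_edge_def doubleton_eq_iff split: if_splits)
  qed
  then show "local_antimagic_labeling V E f"
    unfolding local_antimagic_labeling_def f_def E_def
    using bouquet_labeling_bij[OF L label_bij] by blast
  show "vsum f E ` V \<subseteq> {(2*n + 1)^2, (2*n + 1)^2 + (2*n + 1)}"
  proof
    fix s assume "s \<in> vsum f E ` V"
    then obtain i j where "i < Suc n" "j < cycle_lengths n i"
        "s = vsum f E (bouquet_vertex (cycle_lengths n) i j)"
      unfolding V_def bouquet_vertices_def cycle_vertices_def by blast
    then show "s \<in> {(2*n + 1)^2, (2*n + 1)^2 + (2*n + 1)}"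
      using vsum_label_bouquet[OF assms(1), of i j] by (simp add: f_def E_def)
  qed
qed

theorem mainTheorem14:
  shows "\<forall>N::nat. \<exists>(V::nat set) (E::nat set set).
           card V \<ge> N \<and> simple_graph V E \<and> connected_graph V E \<and>
           one_point_union_of_regular V E \<and> chi_la V E = 2"
proof
  fix N :: nat
  define n where "n = N + 2"
  let ?L = "cycle_lengths n"
  let ?V = "bouquet_vertices (Suc n) ?L" and ?E = "bouquet_edges (Suc n) ?L"
  let ?f = "bouquet_labeling (Suc n) ?L (label n)"
  have "2 \<le> n" by (simp add: n_def)
  then have lengths: "\<And>i. i < Suc n \<Longrightarrow> 3 \<le> ?L i" by (simp add: cycle_lengths_def)
  have "N \<le> card ?V"
    using card_bouquet_vertices_ge[of 0 "Suc n" ?L] by (simp add: n_def cycle_lengths_def)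
  moreover have "simple_graph ?V ?E" using lengths by (rule bouquet_simple_graph)
  moreover have "connected_graph ?V ?E"
    using lengths by (intro bouquet_connected) (simp_all add: less_le_trans[of 0 3])
  moreover have "one_point_union_of_regular ?V ?E"
    using lengths \<open>2 \<le> n\<close> by (intro bouquet_one_point_union) simp_all
  moreover have "chi_la ?V ?E = 2"
  proof (rule chi_la_eq_2)
    show "finite ?V" by (simp add: bouquet_vertices_def cycle_vertices_def)
    show "{0, bouquet_vertex ?L 0 1} \<in> ?E" "0 \<in> ?V" "bouquet_vertex ?L 0 1 \<in> ?V"
      using lengths[of 0] by (auto simp: bouquet_edges_def cycle_edges_def bouquet_edge_def
          bouquet_vertices_def cycle_vertices_def intro!: bexI[of _ 0])
    show "local_antimagic_labeling ?V ?E ?f" using \<open>2 \<le> n\<close> by (rule label_local_antimagic)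
    have "card (vsum ?f ?E ` ?V) \<le> card {(2*n + 1)^2, (2*n + 1)^2 + (2*n + 1)}"
      using \<open>2 \<le> n\<close> by (intro card_mono label_local_antimagic) simp_all
    also have "\<dots> \<le> 2" by (simp add: card_insert_if)
    finally show "card (vsum ?f ?E ` ?V) \<le> 2" .
  qed
  ultimately show "\<exists>(V::nat set) (E::nat set set). N \<le> card V \<and> simple_graph V E \<and> connected_graph V E \<and>
           one_point_union_of_regular V E \<and> chi_la V E = 2"
    by blast
qed

end
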